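(* Let $\mathbf{P}=(X,P)$ be a CPT poset and let $M$ be a strong module of $\mathbf{P}$. If there exists a CPT representation $\{W_x\}_{x\in X}$ of $\mathbf{P}$ in which some element $x\in M$ is represented by a trivial path (a single vertex), then no element of $M$ is greater than an element of $X\setminus M$; that is, there are no $m\in M$ and $y\in X\setminus M$ with $y<m$.
   Context: A CPT representation of a poset $\mathbf{P}=(X,P)$ assigns to each $x\in X$ a path $W_x$ (vertex set) of a host tree $T$ so that $x<y$ iff $W_x\subsetneq W_y$. A set $M\subseteq X$ is a module if every $y\notin M$ is comparable to all elements of $M$ or incomparable to all of them; it is strong if it does not properly overlap any other module (for every module $M'$, $M\cap M'=\emptyset$ or $M\subseteq M'$ or $M'\subseteq M$). A trivial path is a path consisting of a single vertex. *)

theory Defs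
  imports Main
begin

definition strict_poset :: "'a set \<Rightarrow> ('a \<Rightarrow> 'a \<Rightarrow> bool) \<Rightarrow> bool" where
  "strict_poset X lt \<longleftrightarrow>
     finite X \<and>
     (\<forall>x\<in>X. \<not> lt x x) \<and>
     (\<forall>x\<in>X. \<forall>y\<in>X. \<forall>z\<in>X. lt x y \<longrightarrow> lt y z \<longrightarrow> lt x z)"

definition comparable :: "('a \<Rightarrow> 'a \<Rightarrow> bool) \<Rightarrow> 'a \<Rightarrow> 'a \<Rightarrow> bool" where
  "comparable lt x y \<longleftrightarrow> lt x y \<or> lt y x"

definition is_tree :: "'v set \<Rightarrow> 'v set set \<Rightarrow> bool" where
  "is_tree V E \<longleftrightarrow>
     finite V \<and> V \<noteq> {} \<and>
     (\<forall>e\<in>E. \<exists>u v. e = {u, v} \<and> u \<noteq> v \<and> u \<in> V \<and> v \<in> V) \<and>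
     (\<forall>u\<in>V. \<forall>v\<in>V. (\<lambda>a b. {a, b} \<in> E)\<^sup>*\<^sup>* u v) \<and>
     card E = card V - 1"

definition is_path :: "'v set \<Rightarrow> 'v set set \<Rightarrow> 'v set \<Rightarrow> bool" where
  "is_path V E P \<longleftrightarrow>
     (\<exists>vs. vs \<noteq> [] \<and> distinct vs \<and> set vs = P \<and> set vs \<subseteq> V \<and>
           (\<forall>i. Suc i < length vs \<longrightarrow> {vs ! i, vs ! Suc i} \<in> E))"

definition cpt_rep :: "'a set \<Rightarrow> ('a \<Rightarrow> 'a \<Rightarrow> bool) \<Rightarrow> 'v set \<Rightarrow> 'v set set \<Rightarrow> ('a \<Rightarrow> 'v set) \<Rightarrow> bool" where
  "cpt_rep X lt V E W \<longleftrightarrow>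
     is_tree V E \<and>
     (\<forall>x\<in>X. is_path V E (W x)) \<and>
     (\<forall>x\<in>X. \<forall>y\<in>X. lt x y \<longleftrightarrow> W x \<subset> W y)"

definition is_CPT_poset :: "'v itself \<Rightarrow> 'a set \<Rightarrow> ('a \<Rightarrow> 'a \<Rightarrow> bool) \<Rightarrow> bool" where
  "is_CPT_poset _ X lt \<longleftrightarrow> strict_poset X lt \<and>
     (\<exists>(V::'v set) E W. cpt_rep X lt V E W)"

definition is_module :: "'a set \<Rightarrow> ('a \<Rightarrow> 'a \<Rightarrow> bool) \<Rightarrow> 'a set \<Rightarrow> bool" where
  "is_module X lt M \<longleftrightarrow> M \<subseteq> X \<and>
     (\<forall>y\<in>X - M. (\<forall>m\<in>M. comparable lt y m) \<or> (\<forall>m\<in>M. \<not> comparable lt y m))"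

definition is_strong_module :: "'a set \<Rightarrow> ('a \<Rightarrow> 'a \<Rightarrow> bool) \<Rightarrow> 'a set \<Rightarrow> bool" where
  "is_strong_module X lt M \<longleftrightarrow> is_module X lt M \<and>
     (\<forall>M'. is_module X lt M' \<longrightarrow> M \<inter> M' = {} \<or> M \<subseteq> M' \<or> M' \<subseteq> M)"

end

theory Submission
  imports Defs
begin

text \<open>Let \<open>y \<notin> M\<close> lie below \<open>m \<in> M\<close>; then \<open>y\<close> is comparable to all of \<open>M\<close>.
  A singleton path strictly contains no path, so the element \<open>x \<in> M\<close> with a trivial path lies
  below \<open>y\<close>. Cutting \<open>M\<close> into the part \<open>L\<close> below \<open>y\<close> and the rest, the set of \<open>L\<close> together
  with everything strictly between \<open>L\<close> and \<open>M - L\<close> is a module; it contains \<open>x\<close> and \<open>y\<close> but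
  not \<open>m\<close>, so it overlaps \<open>M\<close> properly.\<close>

lemma cpt_rep_not_less_singleton:
  assumes "cpt_rep X lt V E W" and "x \<in> X" and "y \<in> X" and "W x = {v}"
  shows "\<not> lt y x"
proof
  assume "lt y x"
  then have "W y \<subset> {v}" using assms unfolding cpt_rep_def by blast
  moreover have "W y \<noteq> {}"
    using assms(1,3) unfolding cpt_rep_def is_path_def by auto
  ultimately show False by blast
qed

definition strictly_between :: "'a set \<Rightarrow> ('a \<Rightarrow> 'a \<Rightarrow> bool) \<Rightarrow> 'a set \<Rightarrow> 'a set \<Rightarrow> 'a set" where
  "strictly_between X lt A B = {z \<in> X. (\<forall>a\<in>A. lt a z) \<and> (\<forall>b\<in>B. lt z b)}"

lemma strictly_between_disjoint_module:
  assumes "strict_poset X lt" and "M \<subseteq> X" and "L \<subseteq> M" and "L \<noteq> {}"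
  shows "strictly_between X lt L (M - L) \<inter> M = {}"
  using assms unfolding strict_poset_def strictly_between_def by blast

lemma is_module_lower_cut_union_between:
  assumes sp: "strict_poset X lt" and mod: "is_module X lt M"
    and LM: "L \<subseteq> M" and cut: "\<forall>l\<in>L. \<forall>h\<in>M - L. lt l h"
    and "L \<noteq> {}" and "M - L \<noteq> {}"
  shows "is_module X lt (L \<union> strictly_between X lt L (M - L))"
proof -
  define B where "B = strictly_between X lt L (M - L)"
  have MX: "M \<subseteq> X" using mod unfolding is_module_def by blast
  have trans: "\<And>a b c. a \<in> X \<Longrightarrow> b \<in> X \<Longrightarrow> c \<in> X \<Longrightarrow> lt a b \<Longrightarrow> lt b c \<Longrightarrow> lt a c"
    using sp unfolding strict_poset_def by blast
  have B: "\<And>c. c \<in> B \<Longrightarrow> c \<in> X \<and> (\<forall>l\<in>L. lt l c) \<and> (\<forall>h\<in>M - L. lt c h)"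
    unfolding B_def strictly_between_def by blast
  have "(\<forall>c\<in>L \<union> B. comparable lt z c) \<or> (\<forall>c\<in>L \<union> B. \<not> comparable lt z c)"
    if z: "z \<in> X - (L \<union> B)" for z
  proof (cases "z \<in> M")
    case True
    then show ?thesis using z cut B unfolding comparable_def by blast
  next
    case False
    with z mod consider "\<forall>w\<in>M. comparable lt z w" | "\<forall>w\<in>M. \<not> comparable lt z w"
      unfolding is_module_def by blast
    then show ?thesis
    proof cases
      case all: 1
      from z False obtain w where "w \<in> L \<and> lt z w \<or> w \<in> M - L \<and> lt w z"
        using all LM unfolding B_def strictly_between_def comparable_def by blast
      then have "\<forall>c\<in>B. comparable lt z c"
        using B trans z MX LM unfolding comparable_def by blast
      then show ?thesis using all LM by blast
    next
      case none: 2
      obtain l h where "l \<in> L" "h \<in> M - L" using \<open>L \<noteq> {}\<close> \<open>M - L \<noteq> {}\<close> by blast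
      then have "\<not> comparable lt z c" if "c \<in> B" for c
        using that none B trans[of z c h] trans[of l c z] z MX LM
        unfolding comparable_def by blast
      then show ?thesis using none LM by blast
    qed
  qed
  moreover have "L \<union> B \<subseteq> X" using LM MX B by blast
  ultimately show ?thesis unfolding is_module_def B_def by blast
qed

theorem mainTheorem3:
  fixes X :: "'a set" and lt :: "'a \<Rightarrow> 'a \<Rightarrow> bool" and M :: "'a set"
  assumes "is_CPT_poset TYPE('v) X lt"
    and "is_strong_module X lt M"
    and "\<exists>(V::'v set) E W. cpt_rep X lt V E W \<and> (\<exists>x\<in>M. \<exists>v. W x = {v})"
  shows "\<not> (\<exists>m\<in>M. \<exists>y\<in>X - M. lt y m)"
proof
  assume "\<exists>m\<in>M. \<exists>y\<in>X - M. lt y m"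
  then obtain m y where m: "m \<in> M" and y: "y \<in> X - M" and "lt y m" by blast
  obtain V :: "'v set" and E W x v where rep: "cpt_rep X lt V E W" and x: "x \<in> M" and "W x = {v}"
    using assms(3) by blast
  have sp: "strict_poset X lt" using assms(1) unfolding is_CPT_poset_def by blast
  have mod: "is_module X lt M" and MX: "M \<subseteq> X"
    using assms(2) unfolding is_strong_module_def is_module_def by blast+
  have y_comparable: "\<forall>w\<in>M. comparable lt y w"
    using mod y m \<open>lt y m\<close> unfolding is_module_def comparable_def by blast
  have "\<not> lt y x" using cpt_rep_not_less_singleton[OF rep] \<open>W x = {v}\<close> x y MX by blast
  then have "lt x y" using y_comparable x unfolding comparable_def by blast
  define L where "L = {w \<in> M. lt w y}"
  have "\<forall>h\<in>M - L. lt y h" using y_comparable unfolding L_def comparable_def by blast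
  then have cut: "\<forall>l\<in>L. \<forall>h\<in>M - L. lt l h"
    using sp MX y unfolding L_def strict_poset_def by blast
  have "m \<notin> L" using sp \<open>lt y m\<close> m MX y unfolding L_def strict_poset_def by blast
  have "x \<in> L" using x \<open>lt x y\<close> unfolding L_def by blast
  have "y \<in> strictly_between X lt L (M - L)"
    using y \<open>\<forall>h\<in>M - L. lt y h\<close> unfolding L_def strictly_between_def by blast
  moreover have "is_module X lt (L \<union> strictly_between X lt L (M - L))"
    using is_module_lower_cut_union_between[OF sp mod _ cut] \<open>x \<in> L\<close> \<open>m \<notin> L\<close> m L_def by blast
  moreover have "m \<notin> strictly_between X lt L (M - L)"
    using strictly_between_disjoint_module[OF sp MX, of L] \<open>x \<in> L\<close> m L_def by blast
  ultimately show False
    using assms(2) \<open>x \<in> L\<close> \<open>m \<notin> L\<close> x m y L_def unfolding is_strong_module_def by blast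
qed

end
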